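(* Let $f\colon X\to Y$ be a dc-embedding of two-sorted ultrametric spaces. (1) $f$ is continuous if and only if $D_f$ is continuous at $0$ or $X$ is discrete. (2) $f$ is uniformly continuous if and only if $D_f$ is continuous at $0$ or $X$ is uniformly discrete. In particular, a dc-isomorphism is always a uniform homeomorphism.
   Context: A two-sorted ultrametric space is a triple $(X,d_X,D_X)$ where $D_X$ is a linearly ordered set with least element $0$, $X$ is a set, and $d_X\colon X\times X\to D_X$ is symmetric, $d_X(x,y)=0\iff x=y$, and $d_X(x,z)\le\max\{d_X(x,y),d_X(y,z)\}$. A dc-embedding $f\colon X\to Y$ is an injection $f\colon X\to Y$ together with an order embedding $D_f\colon D_X\to D_Y$ with $D_f(0)=0$ such that $d_Y(f(x),f(x'))=D_f(d_X(x,x'))$; a dc-isomorphism is one bijective in both sorts. For $a\in X$ and $r\in D_X\setminus\{0\}$, $B_r(a)=\{x: d_X(x,a)<r\}$. The topology of $X$: $U$ is open iff for each $a\in U$ there is $r\in D_X\setminus\{0\}$ with $B_r(a)\subseteq U$; the uniformity is generated by the partitions $\{B_r(a):a\in X\}$, $r\in D_X\setminus\{0\}$. Thus $f$ is continuous iff for all $\varepsilon\in D_Y\setminus\{0\}$ and $x\in X$ there is $\delta\in D_X\setminus\{0\}$ with $f[B_\delta(x)]\subseteq B_\varepsilon(f(x))$, and uniformly continuous if $\delta$ can be chosen independently of $x$. $D_f$ is continuous at $0$ if there is no $\varepsilon\in D_Y$ with $0<\varepsilon<D_f(r)$ for all $r\in D_X\setminus\{0\}$. $X$ is discrete if for each $x$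 there is $\varepsilon\in D_X\setminus\{0\}$ with $B_\varepsilon(x)=\{x\}$, and uniformly discrete if $\varepsilon$ can be chosen independently of $x$. *)

theory Defs
  imports Main
begin

text \<open>A two-sorted ultrametric space: carrier X, distance set = the linearly
ordered type 'd, whose least element bot plays the role of 0.\<close>

definition ultrametric :: "'a set \<Rightarrow> ('a \<Rightarrow> 'a \<Rightarrow> 'd::{linorder,order_bot}) \<Rightarrow> bool" where
  "ultrametric X d \<longleftrightarrow>
     (\<forall>x\<in>X. \<forall>y\<in>X. d x y = d y x) \<and>
     (\<forall>x\<in>X. \<forall>y\<in>X. d x y = bot \<longleftrightarrow> x = y) \<and>
     (\<forall>x\<in>X. \<forall>y\<in>X. \<forall>z\<in>X. d x z \<le> max (d x y) (d y z))"

definition uball :: "'a set \<Rightarrow> ('a \<Rightarrow> 'a \<Rightarrow> 'd::{linorder,order_bot}) \<Rightarrow> 'a \<Rightarrow> 'd \<Rightarrow> 'a set" where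
  "uball X d a r = {x\<in>X. d x a < r}"

definition dc_embedding ::
  "'a set \<Rightarrow> ('a \<Rightarrow> 'a \<Rightarrow> 'd::{linorder,order_bot}) \<Rightarrow>
   'b set \<Rightarrow> ('b \<Rightarrow> 'b \<Rightarrow> 'e::{linorder,order_bot}) \<Rightarrow>
   ('a \<Rightarrow> 'b) \<Rightarrow> ('d \<Rightarrow> 'e) \<Rightarrow> bool" where
  "dc_embedding X dX Y dY f Df \<longleftrightarrow>
     ultrametric X dX \<and> ultrametric Y dY \<and>
     inj_on f X \<and> f ` X \<subseteq> Y \<and>
     strict_mono Df \<and> Df bot = bot \<and>
     (\<forall>x\<in>X. \<forall>x'\<in>X. dY (f x) (f x') = Df (dX x x'))"

definition dc_isomorphism ::
  "'a set \<Rightarrow> ('a \<Rightarrow> 'a \<Rightarrow> 'd::{linorder,order_bot}) \<Rightarrow>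
   'b set \<Rightarrow> ('b \<Rightarrow> 'b \<Rightarrow> 'e::{linorder,order_bot}) \<Rightarrow>
   ('a \<Rightarrow> 'b) \<Rightarrow> ('d \<Rightarrow> 'e) \<Rightarrow> bool" where
  "dc_isomorphism X dX Y dY f Df \<longleftrightarrow>
     dc_embedding X dX Y dY f Df \<and> bij_betw f X Y \<and> bij Df"

definition um_continuous ::
  "'a set \<Rightarrow> ('a \<Rightarrow> 'a \<Rightarrow> 'd::{linorder,order_bot}) \<Rightarrow>
   'b set \<Rightarrow> ('b \<Rightarrow> 'b \<Rightarrow> 'e::{linorder,order_bot}) \<Rightarrow> ('a \<Rightarrow> 'b) \<Rightarrow> bool" where
  "um_continuous X dX Y dY f \<longleftrightarrow>
     (\<forall>\<epsilon>. \<epsilon> \<noteq> bot \<longrightarrow> (\<forall>x\<in>X. \<exists>\<delta>. \<delta> \<noteq> bot \<and>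
        f ` uball X dX x \<delta> \<subseteq> uball Y dY (f x) \<epsilon>))"

definition um_uniformly_continuous ::
  "'a set \<Rightarrow> ('a \<Rightarrow> 'a \<Rightarrow> 'd::{linorder,order_bot}) \<Rightarrow>
   'b set \<Rightarrow> ('b \<Rightarrow> 'b \<Rightarrow> 'e::{linorder,order_bot}) \<Rightarrow> ('a \<Rightarrow> 'b) \<Rightarrow> bool" where
  "um_uniformly_continuous X dX Y dY f \<longleftrightarrow>
     (\<forall>\<epsilon>. \<epsilon> \<noteq> bot \<longrightarrow> (\<exists>\<delta>. \<delta> \<noteq> bot \<and> (\<forall>x\<in>X.
        f ` uball X dX x \<delta> \<subseteq> uball Y dY (f x) \<epsilon>)))"

definition continuous_at_zero :: "('d::{linorder,order_bot} \<Rightarrow> 'e::{linorder,order_bot}) \<Rightarrow> bool" where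
  "continuous_at_zero Df \<longleftrightarrow> \<not> (\<exists>\<epsilon>. bot < \<epsilon> \<and> (\<forall>r. r \<noteq> bot \<longrightarrow> \<epsilon> < Df r))"

definition um_discrete :: "'a set \<Rightarrow> ('a \<Rightarrow> 'a \<Rightarrow> 'd::{linorder,order_bot}) \<Rightarrow> bool" where
  "um_discrete X d \<longleftrightarrow> (\<forall>x\<in>X. \<exists>\<epsilon>. \<epsilon> \<noteq> bot \<and> uball X d x \<epsilon> = {x})"

definition um_uniformly_discrete :: "'a set \<Rightarrow> ('a \<Rightarrow> 'a \<Rightarrow> 'd::{linorder,order_bot}) \<Rightarrow> bool" where
  "um_uniformly_discrete X d \<longleftrightarrow> (\<exists>\<epsilon>. \<epsilon> \<noteq> bot \<and> (\<forall>x\<in>X. uball X d x \<epsilon> = {x}))"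

definition um_uniform_homeomorphism ::
  "'a set \<Rightarrow> ('a \<Rightarrow> 'a \<Rightarrow> 'd::{linorder,order_bot}) \<Rightarrow>
   'b set \<Rightarrow> ('b \<Rightarrow> 'b \<Rightarrow> 'e::{linorder,order_bot}) \<Rightarrow> ('a \<Rightarrow> 'b) \<Rightarrow> bool" where
  "um_uniform_homeomorphism X dX Y dY f \<longleftrightarrow>
     bij_betw f X Y \<and> um_uniformly_continuous X dX Y dY f \<and>
     um_uniformly_continuous Y dY X dX (inv_into X f)"

end

theory Submission
  imports Defs
begin

text \<open>A dc-embedding satisfies \<open>dY (f y) (f x) = Df (dX y x)\<close>, so \<open>f\<close> maps the ball of radius
  \<open>\<delta>\<close> about \<open>x\<close> into the ball of radius \<open>\<epsilon>\<close> about \<open>f x\<close> exactly when \<open>Df\<close> maps the distances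
  below \<open>\<delta>\<close> that actually occur at \<open>x\<close> below \<open>\<epsilon>\<close>. If \<open>Df\<close> is continuous at \<open>0\<close>, one \<open>\<delta>\<close> with
  \<open>Df \<delta> \<le> \<epsilon>\<close> works for all \<open>x\<close> by monotonicity. Otherwise some \<open>\<epsilon> > 0\<close> lies below every nonzero
  value of \<open>Df\<close>, and then continuity at \<open>x\<close> for this \<open>\<epsilon>\<close> forces the \<open>\<delta>\<close>-ball about \<open>x\<close> to be
  \<open>{x}\<close>. A surjective \<open>Df\<close> is continuous at \<open>0\<close>, and the inverse of a dc-isomorphism is again
  one, which gives the uniform homeomorphism.\<close>

lemma uball_centre:
  assumes "ultrametric X d" "x \<in> X" "r \<noteq> bot"
  shows "x \<in> uball X d x r"
  using assms bot_less unfolding ultrametric_def uball_def by fastforce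

lemma dc_embedding_image_uball_subset_iff:
  assumes "dc_embedding X dX Y dY f Df" "x \<in> X"
  shows "f ` uball X dX x \<delta> \<subseteq> uball Y dY (f x) \<epsilon> \<longleftrightarrow>
           (\<forall>y\<in>uball X dX x \<delta>. Df (dX y x) < \<epsilon>)"
  using assms unfolding dc_embedding_def uball_def by auto

lemma um_uniformly_continuous_imp_um_continuous:
  "um_uniformly_continuous X dX Y dY f \<Longrightarrow> um_continuous X dX Y dY f"
  unfolding um_uniformly_continuous_def um_continuous_def by meson

lemma um_uniformly_continuous_if_uniformly_discrete:
  fixes dY :: "'b \<Rightarrow> 'b \<Rightarrow> 'e::{linorder,order_bot}"
  assumes "ultrametric Y dY" "f ` X \<subseteq> Y" "um_uniformly_discrete X dX"
  shows "um_uniformly_continuous X dX Y dY f"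
  unfolding um_uniformly_continuous_def
proof (intro allI impI)
  fix \<epsilon> :: 'e
  assume "\<epsilon> \<noteq> bot"
  obtain \<delta> where "\<delta> \<noteq> bot" "\<forall>x\<in>X. uball X dX x \<delta> = {x}"
    using assms(3) unfolding um_uniformly_discrete_def by blast
  moreover have "\<forall>x\<in>X. f x \<in> uball Y dY (f x) \<epsilon>"
    using uball_centre[OF assms(1) _ \<open>\<epsilon> \<noteq> bot\<close>] assms(2) by blast
  ultimately show "\<exists>\<delta>. \<delta> \<noteq> bot \<and> (\<forall>x\<in>X. f ` uball X dX x \<delta> \<subseteq> uball Y dY (f x) \<epsilon>)"
    by auto
qed

lemma um_continuous_if_discrete:
  fixes dY :: "'b \<Rightarrow> 'b \<Rightarrow> 'e::{linorder,order_bot}"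
  assumes "ultrametric Y dY" "f ` X \<subseteq> Y" "um_discrete X dX"
  shows "um_continuous X dX Y dY f"
  unfolding um_continuous_def
proof (intro allI impI ballI)
  fix \<epsilon> :: 'e and x
  assume "\<epsilon> \<noteq> bot" and x: "x \<in> X"
  obtain \<delta> where "\<delta> \<noteq> bot" "uball X dX x \<delta> = {x}"
    using assms(3) x unfolding um_discrete_def by blast
  moreover have "f x \<in> uball Y dY (f x) \<epsilon>"
    using uball_centre[OF assms(1) _ \<open>\<epsilon> \<noteq> bot\<close>] assms(2) x by blast
  ultimately show "\<exists>\<delta>. \<delta> \<noteq> bot \<and> f ` uball X dX x \<delta> \<subseteq> uball Y dY (f x) \<epsilon>"
    by auto
qed

lemma dc_embedding_uniformly_continuous_if_continuous_at_zero:
  fixes dY :: "'b \<Rightarrow> 'b \<Rightarrow> 'e::{linorder,order_bot}"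
  assumes emb: "dc_embedding X dX Y dY f Df" and cont: "continuous_at_zero Df"
  shows "um_uniformly_continuous X dX Y dY f"
  unfolding um_uniformly_continuous_def
proof (intro allI impI)
  fix \<epsilon> :: 'e
  assume "\<epsilon> \<noteq> bot"
  then obtain \<delta> where \<delta>: "\<delta> \<noteq> bot" "Df \<delta> \<le> \<epsilon>"
    using cont bot_less unfolding continuous_at_zero_def by (metis not_less)
  have "strict_mono Df"
    using emb unfolding dc_embedding_def by blast
  then have "Df r < \<epsilon>" if "r < \<delta>" for r
    using that \<delta>(2) by (meson order_less_le_trans strict_monoD)
  then have "\<forall>x\<in>X. f ` uball X dX x \<delta> \<subseteq> uball Y dY (f x) \<epsilon>"
    using dc_embedding_image_uball_subset_iff[OF emb] by (simp add: uball_def)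
  with \<delta>(1) show "\<exists>\<delta>. \<delta> \<noteq> bot \<and> (\<forall>x\<in>X. f ` uball X dX x \<delta> \<subseteq> uball Y dY (f x) \<epsilon>)"
    by blast
qed

lemma dc_embedding_discontinuous_scale:
  assumes emb: "dc_embedding X dX Y dY f Df" and "\<not> continuous_at_zero Df"
  obtains \<epsilon> where "\<epsilon> \<noteq> bot"
    "\<And>x \<delta>. x \<in> X \<Longrightarrow> \<delta> \<noteq> bot \<Longrightarrow> f ` uball X dX x \<delta> \<subseteq> uball Y dY (f x) \<epsilon> \<Longrightarrow>
       uball X dX x \<delta> = {x}"
proof -
  obtain \<epsilon> where \<epsilon>: "bot < \<epsilon>" "\<And>r. r \<noteq> bot \<Longrightarrow> \<epsilon> < Df r"
    using assms(2) unfolding continuous_at_zero_def by blast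
  have ultra: "ultrametric X dX"
    using emb unfolding dc_embedding_def by blast
  show thesis
  proof
    show "\<epsilon> \<noteq> bot"
      using \<epsilon>(1) by simp
    fix x \<delta>
    assume x: "x \<in> X" and "\<delta> \<noteq> bot" and sub: "f ` uball X dX x \<delta> \<subseteq> uball Y dY (f x) \<epsilon>"
    have "dX y x = bot" if "y \<in> uball X dX x \<delta>" for y
      using that sub \<epsilon>(2) dc_embedding_image_uball_subset_iff[OF emb x]
      by (meson not_less_iff_gr_or_eq)
    then have "uball X dX x \<delta> \<subseteq> {x}"
      using x ultra unfolding ultrametric_def uball_def by auto
    then show "uball X dX x \<delta> = {x}"
      using uball_centre[OF ultra x \<open>\<delta> \<noteq> bot\<close>] by blast
  qed
qed

lemma dc_embedding_continuous_iff:
  assumes emb: "dc_embedding X dX Y dY f Df"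
  shows "um_continuous X dX Y dY f \<longleftrightarrow> continuous_at_zero Df \<or> um_discrete X dX"
proof
  assume cont: "um_continuous X dX Y dY f"
  show "continuous_at_zero Df \<or> um_discrete X dX"
  proof (cases "continuous_at_zero Df")
    case False
    obtain \<epsilon> where "\<epsilon> \<noteq> bot" and isolate:
      "\<And>x \<delta>. x \<in> X \<Longrightarrow> \<delta> \<noteq> bot \<Longrightarrow> f ` uball X dX x \<delta> \<subseteq> uball Y dY (f x) \<epsilon> \<Longrightarrow>
         uball X dX x \<delta> = {x}"
      using dc_embedding_discontinuous_scale[OF emb False] by metis
    have "um_discrete X dX"
      unfolding um_discrete_def
    proof
      fix x
      assume x: "x \<in> X"
      then obtain \<delta> where "\<delta> \<noteq> bot" "f ` uball X dX x \<delta> \<subseteq> uball Y dY (f x) \<epsilon>"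
        using cont \<open>\<epsilon> \<noteq> bot\<close> unfolding um_continuous_def by meson
      with isolate x show "\<exists>\<delta>. \<delta> \<noteq> bot \<and> uball X dX x \<delta> = {x}"
        by meson
    qed
    then show ?thesis ..
  qed simp
next
  have Y: "ultrametric Y dY" "f ` X \<subseteq> Y"
    using emb unfolding dc_embedding_def by auto
  assume "continuous_at_zero Df \<or> um_discrete X dX"
  then show "um_continuous X dX Y dY f"
    by (metis um_continuous_if_discrete[OF Y] um_uniformly_continuous_imp_um_continuous
        dc_embedding_uniformly_continuous_if_continuous_at_zero[OF emb])
qed

lemma dc_embedding_uniformly_continuous_iff:
  assumes emb: "dc_embedding X dX Y dY f Df"
  shows "um_uniformly_continuous X dX Y dY f \<longleftrightarrow>
           continuous_at_zero Df \<or> um_uniformly_discrete X dX"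
proof
  assume cont: "um_uniformly_continuous X dX Y dY f"
  show "continuous_at_zero Df \<or> um_uniformly_discrete X dX"
  proof (cases "continuous_at_zero Df")
    case False
    obtain \<epsilon> where "\<epsilon> \<noteq> bot" and isolate:
      "\<And>x \<delta>. x \<in> X \<Longrightarrow> \<delta> \<noteq> bot \<Longrightarrow> f ` uball X dX x \<delta> \<subseteq> uball Y dY (f x) \<epsilon> \<Longrightarrow>
         uball X dX x \<delta> = {x}"
      using dc_embedding_discontinuous_scale[OF emb False] by metis
    obtain \<delta> where "\<delta> \<noteq> bot" "\<forall>x\<in>X. f ` uball X dX x \<delta> \<subseteq> uball Y dY (f x) \<epsilon>"
      using cont \<open>\<epsilon> \<noteq> bot\<close> unfolding um_uniformly_continuous_def by meson
    with isolate have "um_uniformly_discrete X dX"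
      unfolding um_uniformly_discrete_def by meson
    then show ?thesis ..
  qed simp
next
  have Y: "ultrametric Y dY" "f ` X \<subseteq> Y"
    using emb unfolding dc_embedding_def by auto
  assume "continuous_at_zero Df \<or> um_uniformly_discrete X dX"
  then show "um_uniformly_continuous X dX Y dY f"
    by (metis um_uniformly_continuous_if_uniformly_discrete[OF Y]
        dc_embedding_uniformly_continuous_if_continuous_at_zero[OF emb])
qed

lemma continuous_at_zero_if_surj:
  assumes "surj Df" "Df bot = bot"
  shows "continuous_at_zero Df"
  using assms unfolding continuous_at_zero_def by (metis less_irrefl surjD)

lemma dc_isomorphism_inverse:
  assumes "dc_isomorphism X dX Y dY f Df"
  shows "dc_isomorphism Y dY X dX (inv_into X f) (inv Df)"
proof -
  have emb: "dc_embedding X dX Y dY f Df" and f: "bij_betw f X Y" and D: "bij Df"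
    using assms unfolding dc_isomorphism_def by auto
  then have "ultrametric X dX" "ultrametric Y dY" and mono: "strict_mono Df"
    and "Df bot = bot"
    and dist: "\<And>x x'. x \<in> X \<Longrightarrow> x' \<in> X \<Longrightarrow> dY (f x) (f x') = Df (dX x x')"
    unfolding dc_embedding_def by auto
  have inv_Df: "inv Df (Df r) = r" for r
    using D by (simp add: bij_is_inj)
  have "strict_mono (inv Df)"
    using strict_mono_inv[OF mono bij_is_surj[OF D] inv_Df] .
  moreover have "inv Df bot = bot"
    using \<open>Df bot = bot\<close> inv_Df by metis
  moreover have "dX (inv_into X f y) (inv_into X f y') = inv Df (dY y y')"
    if "y \<in> Y" "y' \<in> Y" for y y'
  proof -
    have "y = f (inv_into X f y)" "y' = f (inv_into X f y')"
      using that f by (simp_all add: bij_betw_inv_into_right)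
    then show ?thesis
      using dist[OF inv_into_into inv_into_into] that f inv_Df
      by (metis bij_betw_imp_surj_on)
  qed
  moreover have "bij_betw (inv_into X f) Y X"
    using bij_betw_inv_into[OF f] .
  ultimately show ?thesis
    using \<open>ultrametric X dX\<close> \<open>ultrametric Y dY\<close> bij_imp_bij_inv[OF D]
    unfolding dc_isomorphism_def dc_embedding_def bij_betw_def by blast
qed

lemma dc_isomorphism_uniformly_continuous:
  assumes "dc_isomorphism X dX Y dY f Df"
  shows "um_uniformly_continuous X dX Y dY f"
proof -
  have emb: "dc_embedding X dX Y dY f Df" and "surj Df" "Df bot = bot"
    using assms unfolding dc_isomorphism_def dc_embedding_def bij_def by auto
  then show ?thesis
    using continuous_at_zero_if_surj dc_embedding_uniformly_continuous_if_continuous_at_zero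
    by blast
qed

lemma dc_isomorphism_uniform_homeomorphism:
  assumes "dc_isomorphism X dX Y dY f Df"
  shows "um_uniform_homeomorphism X dX Y dY f"
  using assms dc_isomorphism_uniformly_continuous[OF assms]
    dc_isomorphism_uniformly_continuous[OF dc_isomorphism_inverse[OF assms]]
  unfolding um_uniform_homeomorphism_def dc_isomorphism_def by blast

theorem lemma2p13:
  fixes X :: "'a set" and dX :: "'a \<Rightarrow> 'a \<Rightarrow> 'd::{linorder,order_bot}"
    and Y :: "'b set" and dY :: "'b \<Rightarrow> 'b \<Rightarrow> 'e::{linorder,order_bot}"
    and f :: "'a \<Rightarrow> 'b" and Df :: "'d \<Rightarrow> 'e"
  shows "(dc_embedding X dX Y dY f Df \<longrightarrow>
           (um_continuous X dX Y dY f \<longleftrightarrow> continuous_at_zero Df \<or> um_discrete X dX)) \<and>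
         (dc_embedding X dX Y dY f Df \<longrightarrow>
           (um_uniformly_continuous X dX Y dY f \<longleftrightarrow>
              continuous_at_zero Df \<or> um_uniformly_discrete X dX)) \<and>
         (dc_isomorphism X dX Y dY f Df \<longrightarrow> um_uniform_homeomorphism X dX Y dY f)"
  using dc_embedding_continuous_iff dc_embedding_uniformly_continuous_iff
    dc_isomorphism_uniform_homeomorphism by blast

end
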